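(* Let $n\ge 1$ and $0\le \ell\le n$ be integers, let $\lambda=\max\{\ell,n-\ell\}$, and consider the classical encryption scheme defined in the context. Let $X,X'$ be independent, identically distributed random variables on $\{0,1\}^n$ (the plaintext distribution), let $K,K'$ be independent and uniform on $\{0,1\}^\ell$, let $U,U'$ be independent and uniform on $\{0,1\}^\lambda$, and let $V,V'$ be independent and uniform on $\{0,1\}^{n-\ell}$, all these variables being mutually independent. Then $$\Pr\big[\mathsf{Enc}_{UV}(K,X)=\mathsf{Enc}_{U'V'}(K',X')\big]\;\le\;2^{-2n}\Big(1+2^{\,n-\ell-\mathsf H_2(X)}\Big),$$ where $\mathsf H_2(X)=-\log_2\sum_x \Pr[X=x]^2$ is the collision entropy.
   Context: Bit strings are identified with elements of the finite field $\mathrm{GF}(2^\lambda)$ via the polynomial representation (a string of length at most $\lambda$ is viewed as a polynomial of degree $<\lambda$, padded with zeros); addition is bitwise XOR, denoted $\oplus$ or $+$. For a field element $w$, $(w)_{\rm lsb}$ denotes its last (least significant) $n-\ell$ bits, i.e. the polynomial reduced modulo $x^{n-\ell}$. For $u\in\{0,1\}^\lambda$, $v\in\{0,1\}^{n-\ell}$ and key $k\in\{0,1\}^\ell$ define $h_{uv}(k)=k\,\|\,\big((uk)_{\rm lsb}+v\big)\in\{0,1\}^n$, where $\|$ is concatenation and $uk$ is the product in $\mathrm{GF}(2^\lambda)$. The (randomized) encryption of a plaintext $x\in\{0,1\}^n$ is $\mathsf{Enc}_{uv}(k,x)=(u,v,x\oplus h_{uv}(k))$, with $u,v$ drawn uniformly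 at random; decryption is $\mathsf{Dec}(k,(c_1,c_2,c_3))=c_3\oplus h_{c_1c_2}(k)$. Logarithms are base 2. *)

theory Defs
  imports "HOL-Probability.Probability" "HOL-Library.Z2" "HOL-Computational_Algebra.Polynomial"
begin

text \<open>Bit strings of length at most m, as polynomials over GF(2) of degree < m.\<close>
definition bitstr :: "nat \<Rightarrow> bit poly set" where
  "bitstr m = {p. \<forall>i\<ge>m. coeff p i = 0}"

definition unif :: "nat \<Rightarrow> bit poly pmf" where
  "unif m = pmf_of_set (bitstr m)"

text \<open>Multiplication in GF(2^lambda) = GF(2)[x]/(P), P irreducible of degree lambda.\<close>
definition gf_mult :: "bit poly \<Rightarrow> bit poly \<Rightarrow> bit poly \<Rightarrow> bit poly" where
  "gf_mult P a b = (a * b) mod P"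

text \<open>Last (least significant) m bits: reduction modulo x^m.\<close>
definition lsb :: "nat \<Rightarrow> bit poly \<Rightarrow> bit poly" where
  "lsb m w = w mod monom 1 m"

text \<open>Concatenation a || b where b has length m: a * x^m + b.\<close>
definition concat_bits :: "nat \<Rightarrow> bit poly \<Rightarrow> bit poly \<Rightarrow> bit poly" where
  "concat_bits m a b = monom 1 m * a + b"

definition hfun :: "bit poly \<Rightarrow> nat \<Rightarrow> nat \<Rightarrow> bit poly \<Rightarrow> bit poly \<Rightarrow> bit poly \<Rightarrow> bit poly" where
  "hfun P n l u v k = concat_bits (n - l) k (lsb (n - l) (gf_mult P u k) + v)"

definition enc :: "bit poly \<Rightarrow> nat \<Rightarrow> nat \<Rightarrow> bit poly \<Rightarrow> bit poly \<Rightarrow> bit poly \<Rightarrow> bit poly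
    \<Rightarrow> bit poly \<times> bit poly \<times> bit poly" where
  "enc P n l u v k x = (u, v, x + hfun P n l u v k)"

definition coll_entropy :: "'a pmf \<Rightarrow> real" where
  "coll_entropy X = - log 2 (\<Sum>x\<in>set_pmf X. (pmf X x)^2)"

definition enc_coll_prob :: "bit poly \<Rightarrow> nat \<Rightarrow> nat \<Rightarrow> bit poly pmf \<Rightarrow> real" where
  "enc_coll_prob P n l X =
     measure_pmf.prob
       (pair_pmf (pair_pmf X X)
         (pair_pmf (pair_pmf (unif l) (unif l))
           (pair_pmf (pair_pmf (unif (max l (n - l))) (unif (max l (n - l))))
                     (pair_pmf (unif (n - l)) (unif (n - l))))))
       {((x, x'), ((k, k'), ((u, u'), (v, v')))). enc P n l u v k x = enc P n l u' v' k' x'}"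

end

theory Submission
  imports Defs "HOL-Computational_Algebra.Polynomial_Factorial"
begin

text \<open>A collision of two encryptions forces \<open>u = u'\<close> and \<open>v = v'\<close>; since addition is XOR,
  the mask \<open>v\<close> then cancels and \<open>x + x' = d \<parallel> (u d)\<^sub>l\<^sub>s\<^sub>b\<close> with \<open>d = k + k'\<close>. For \<open>d = 0\<close>
  this needs \<open>x = x'\<close>. For \<open>d \<noteq> 0\<close> the high bits of \<open>x + x'\<close> determine \<open>d\<close>, and since
  \<open>u \<mapsto> u d\<close> is injective on the field, at most \<open>2^(\<lambda> - (n - \<ell>))\<close> keys \<open>u\<close> produce the
  prescribed low bits. Counting colliding tuples and averaging over \<open>(X, X')\<close> gives the bound
  \<open>(2^(n-\<ell>) \<Sum>\<^sub>x Pr[X = x]^2 + 1) / 2^(\<ell> + \<lambda> + 2(n - \<ell>))\<close>, and \<open>\<lambda> \<ge> \<ell>\<close>.\<close>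

lemma bit_poly_uminus [simp]: "- (p :: bit poly) = p"
  by (rule poly_eqI) simp

lemma bit_poly_diff [simp]: "(p :: bit poly) - q = p + q"
  by (simp add: diff_conv_add_uminus)

lemma bit_poly_add_self [simp]: "(p :: bit poly) + p = 0"
  using left_minus[of p] by simp

lemma bit_poly_two [simp]: "(2 :: bit poly) = 0"
  by (metis bit_poly_add_self one_add_one)

lemma bit_poly_add_eq_0_iff: "(p :: bit poly) + q = 0 \<longleftrightarrow> p = q"
  using right_minus_eq[of p q] by simp

lemma bit_poly_add_eq_add_iff: "(a :: bit poly) + b = c + d \<longleftrightarrow> a + c = b + d"
  by (smt (verit) add.assoc add.commute add_0 bit_poly_add_self)

section \<open>Bit strings\<close>

lemma bitstr_iff_degree: "p \<in> bitstr m \<longleftrightarrow> p = 0 \<or> degree p < m"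
proof
  assume "p \<in> bitstr m"
  then have "p \<noteq> 0 \<Longrightarrow> coeff p (degree p) = 0 \<or> degree p < m"
    by (auto simp: bitstr_def not_le[symmetric])
  then show "p = 0 \<or> degree p < m"
    by auto
next
  assume "p = 0 \<or> degree p < m"
  then show "p \<in> bitstr m" by (auto simp: bitstr_def coeff_eq_0)
qed

lemma zero_in_bitstr [simp]: "0 \<in> bitstr m"
  by (simp add: bitstr_def)

lemma bitstr_nonempty [simp]: "bitstr m \<noteq> {}"
  using zero_in_bitstr by blast

lemma bitstr_add: "a \<in> bitstr m \<Longrightarrow> b \<in> bitstr m \<Longrightarrow> a + b \<in> bitstr m"
  by (simp add: bitstr_def)

lemma bitstr_mono: "m \<le> m' \<Longrightarrow> p \<in> bitstr m \<Longrightarrow> p \<in> bitstr m'"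
  by (auto simp: bitstr_def)

lemma bitstr_Suc: "bitstr (Suc m) = (\<lambda>(a, p). pCons a p) ` (UNIV \<times> bitstr m)"
proof (intro set_eqI iffI)
  fix p assume p: "p \<in> bitstr (Suc m)"
  obtain a q where pq: "p = pCons a q" by (rule pCons_cases)
  have "q \<in> bitstr m"
    using p unfolding bitstr_def pq by (auto dest: spec[of _ "Suc _"])
  then show "p \<in> (\<lambda>(a, p). pCons a p) ` (UNIV \<times> bitstr m)" using pq by auto
next
  fix p assume "p \<in> (\<lambda>(a, p). pCons a p) ` (UNIV \<times> bitstr m)"
  then obtain a q where "p = pCons a q" "q \<in> bitstr m" by auto
  then show "p \<in> bitstr (Suc m)"
    by (auto simp: bitstr_def coeff_pCons split: nat.split)
qed

lemma UNIV_bit: "(UNIV :: bit set) = {0, 1}"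
  by (auto intro: bit.exhaust)

lemma finite_bitstr [simp]: "finite (bitstr m)"
  and card_bitstr [simp]: "card (bitstr m) = 2 ^ m"
proof -
  have "finite (bitstr m) \<and> card (bitstr m) = 2 ^ m"
  proof (induction m)
    case 0
    have "bitstr 0 = {0}" by (auto simp: bitstr_iff_degree)
    then show ?case by simp
  next
    case (Suc m)
    have "inj_on (\<lambda>(a, p). pCons a p) (UNIV \<times> bitstr m)"
      by (auto simp: inj_on_def)
    moreover have "finite (UNIV :: bit set)"
      by (simp add: UNIV_bit)
    moreover have "card (UNIV :: bit set) = 2"
      by (simp add: UNIV_bit)
    ultimately show ?case
      using Suc by (simp add: bitstr_Suc card_image card_cartesian_product)
  qed
  then show "finite (bitstr m)" "card (bitstr m) = 2 ^ m" by auto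
qed

lemma lsb_in_bitstr: "lsb m y \<in> bitstr m"
  unfolding lsb_def bitstr_iff_degree
  using degree_mod_less[of "monom 1 m" y] by (auto simp: degree_monom_eq)

lemma lsb_add: "lsb m (a + b) = lsb m a + lsb m b"
  by (simp add: lsb_def poly_mod_add_left)

lemma lsb_concat_bits: "b \<in> bitstr m \<Longrightarrow> lsb m (concat_bits m a b) = b"
  and concat_bits_div_monom: "b \<in> bitstr m \<Longrightarrow> concat_bits m a b div monom 1 m = a"
proof -
  assume "b \<in> bitstr m"
  then have "b mod monom 1 m = b" "b div monom 1 m = 0"
    by (auto simp: bitstr_iff_degree degree_monom_eq intro: mod_poly_less div_poly_less)
  then show "lsb m (concat_bits m a b) = b" "concat_bits m a b div monom 1 m = a"
    by (simp_all add: lsb_def concat_bits_def poly_mod_add_left poly_div_add_left)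
qed

lemma concat_bits_add:
  "concat_bits m a b + concat_bits m c d = concat_bits m (a + c) (b + d)"
  by (simp add: concat_bits_def algebra_simps)

lemma concat_bits_div_lsb: "concat_bits m (y div monom 1 m) (lsb m y) = y"
  by (simp add: concat_bits_def lsb_def mult.commute)

lemma div_monom_in_bitstr:
  assumes "y \<in> bitstr L"
  shows "y div monom 1 m \<in> bitstr (L - m)"
  unfolding bitstr_def
proof (intro CollectI allI impI)
  fix i assume "L - m \<le> i"
  then have "coeff y (i + m) = 0" "coeff (lsb m y) (i + m) = 0"
    using assms lsb_in_bitstr[of m y] by (simp_all add: bitstr_def)
  then have "coeff (monom 1 m * (y div monom 1 m)) (i + m) = 0"
    using arg_cong[OF concat_bits_div_lsb[of m y], of "\<lambda>p. coeff p (i + m)"]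
    by (simp add: concat_bits_def)
  then show "coeff (y div monom 1 m) i = 0" by (simp add: coeff_monom_mult)
qed

lemma card_lsb_fiber_le: "card {y \<in> bitstr L. lsb m y = w} \<le> 2 ^ (L - m)"
proof -
  have "inj_on (\<lambda>y. y div monom 1 m) {y \<in> bitstr L. lsb m y = w}"
    by (rule inj_onI) (metis (mono_tags, lifting) concat_bits_div_lsb mem_Collect_eq)
  moreover have "(\<lambda>y. y div monom 1 m) ` {y \<in> bitstr L. lsb m y = w} \<subseteq> bitstr (L - m)"
    using div_monom_in_bitstr by auto
  ultimately have "card {y \<in> bitstr L. lsb m y = w} \<le> card (bitstr (L - m))"
    by (intro card_inj_on_le) auto
  then show ?thesis by simp
qed

section \<open>Multiplication in the field\<close>

lemma bitstr_degree_dvd_imp_zero: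
  assumes "p \<in> bitstr (degree P)" "P dvd p"
  shows "p = 0"
proof (rule ccontr)
  assume "p \<noteq> 0"
  then have "degree P \<le> degree p" "degree p < degree P"
    using assms by (auto simp: bitstr_iff_degree dvd_imp_degree_le)
  then show False by simp
qed

lemma gf_mult_in_bitstr: "P \<noteq> 0 \<Longrightarrow> gf_mult P u d \<in> bitstr (degree P)"
  using degree_mod_less[of P "u * d"] by (auto simp: gf_mult_def bitstr_iff_degree)

lemma inj_on_gf_mult:
  assumes "irreducible P" "d \<in> bitstr (degree P)" "d \<noteq> 0"
  shows "inj_on (\<lambda>u. gf_mult P u d) (bitstr (degree P))"
proof (rule inj_onI)
  fix u u' assume u: "u \<in> bitstr (degree P)" "u' \<in> bitstr (degree P)"
    and eq: "gf_mult P u d = gf_mult P u' d"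
  have "P dvd (u - u') * d"
    using eq by (simp add: gf_mult_def mod_eq_dvd_iff algebra_simps)
  moreover have "prime_elem P"
    using assms(1) by (rule field_poly_irreducible_imp_prime)
  moreover have "\<not> P dvd d"
    using assms(2,3) bitstr_degree_dvd_imp_zero by blast
  ultimately have "P dvd u - u'"
    by (simp add: prime_elem_dvd_mult_iff)
  moreover have "u - u' \<in> bitstr (degree P)"
    using u by (simp add: bitstr_add)
  ultimately show "u = u'"
    using bitstr_degree_dvd_imp_zero bit_poly_add_eq_0_iff by fastforce
qed

lemma card_gf_mult_lsb_fiber_le:
  assumes "irreducible P" "d \<in> bitstr (degree P)" "d \<noteq> 0"
  shows "card {u \<in> bitstr (degree P). lsb m (gf_mult P u d) = w} \<le> 2 ^ (degree P - m)"
proof -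
  have "P \<noteq> 0"
    using assms(1) by auto
  then have "(\<lambda>u. gf_mult P u d) ` {u \<in> bitstr (degree P). lsb m (gf_mult P u d) = w}
      \<subseteq> {y \<in> bitstr (degree P). lsb m y = w}"
    using gf_mult_in_bitstr by auto
  moreover have "inj_on (\<lambda>u. gf_mult P u d) {u \<in> bitstr (degree P). lsb m (gf_mult P u d) = w}"
    using inj_on_gf_mult[OF assms] by (rule inj_on_subset) auto
  ultimately have "card {u \<in> bitstr (degree P). lsb m (gf_mult P u d) = w}
      \<le> card {y \<in> bitstr (degree P). lsb m y = w}"
    by (intro card_inj_on_le) auto
  then show ?thesis
    using card_lsb_fiber_le order_trans by blast
qed

section \<open>Counting collisions\<close>

lemma gf_mult_add_right: "gf_mult P u (a + b) = gf_mult P u a + gf_mult P u b"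
  by (simp add: gf_mult_def distrib_left poly_mod_add_left)

lemma enc_eq_imp:
  assumes "enc P n l u v k x = enc P n l u' v' k' x'"
  shows "u' = u" "v' = v"
    and "x + x' = concat_bits (n - l) (k + k') (lsb (n - l) (gf_mult P u (k + k')))"
proof -
  show "u' = u" "v' = v"
    using assms by (simp_all add: enc_def)
  then have "x + x' = hfun P n l u v k + hfun P n l u v k'"
    using assms bit_poly_add_eq_add_iff by (simp add: enc_def)
  also have "\<dots> = concat_bits (n - l) (k + k') (lsb (n - l) (gf_mult P u (k + k')))"
    by (simp add: hfun_def concat_bits_add gf_mult_add_right lsb_add ac_simps)
  finally show "x + x' = concat_bits (n - l) (k + k') (lsb (n - l) (gf_mult P u (k + k')))" .
qed

lemma card_collision_keys_le:
  assumes irr: "irreducible P" and "l \<le> degree P"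
  shows "card {(d, u) \<in> bitstr l \<times> bitstr (degree P).
            z = concat_bits m d (lsb m (gf_mult P u d))}
         \<le> (if z = 0 then 2 ^ degree P else 0) + 2 ^ (degree P - m)"
proof -
  define D where "D = {(d, u) \<in> bitstr l \<times> bitstr (degree P).
    z = concat_bits m d (lsb m (gf_mult P u d))}"
  define d\<^sub>0 where "d\<^sub>0 = z div monom 1 m"
  define U where "U = {u \<in> bitstr (degree P). lsb m (gf_mult P u d\<^sub>0) = lsb m z}"
  have D_bitstr: "d \<in> bitstr (degree P)" "u \<in> bitstr (degree P)" if "(d, u) \<in> D" for d u
    using that assms(2) bitstr_mono unfolding D_def by blast+
  have D_zero: "z = 0" if "(0, u) \<in> D" for u
    using that by (simp add: D_def gf_mult_def lsb_def concat_bits_def)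
  have D_nonzero: "d = d\<^sub>0" "u \<in> U" if "(d, u) \<in> D" for d u
    using that lsb_in_bitstr[of m "gf_mult P u d"]
    by (auto simp: D_def U_def d\<^sub>0_def concat_bits_div_monom lsb_concat_bits)
  have zero_part: "card (D \<inter> {0} \<times> UNIV) \<le> (if z = 0 then 2 ^ degree P else 0)"
  proof (cases "z = 0")
    case True
    have "D \<inter> {0} \<times> UNIV \<subseteq> {0} \<times> bitstr (degree P)"
      using D_bitstr by auto
    then have "card (D \<inter> {0} \<times> UNIV) \<le> card ({0 :: bit poly} \<times> bitstr (degree P))"
      by (intro card_mono) auto
    then show ?thesis
      using True by (simp add: card_cartesian_product)
  next
    case False
    then have "D \<inter> {0} \<times> UNIV = {}"
      using D_zero by auto
    then show ?thesis by simp
  qed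
  have nonzero_part: "card (D - {0} \<times> UNIV) \<le> 2 ^ (degree P - m)"
  proof (cases "d\<^sub>0 \<in> bitstr (degree P) \<and> d\<^sub>0 \<noteq> 0")
    case True
    have "D - {0} \<times> UNIV \<subseteq> {d\<^sub>0} \<times> U"
      using D_nonzero by auto
    then have "card (D - {0} \<times> UNIV) \<le> card ({d\<^sub>0} \<times> U)"
      by (intro card_mono) (auto simp: U_def)
    also have "\<dots> \<le> 2 ^ (degree P - m)"
      using card_gf_mult_lsb_fiber_le[OF irr] True
      by (simp add: U_def card_cartesian_product_singleton)
    finally show ?thesis .
  next
    case False
    then have "D - {0} \<times> UNIV = {}"
      using D_bitstr D_nonzero by auto
    then show ?thesis
      by (metis card.empty le0)
  qed
  have "card D \<le> card (D \<inter> {0} \<times> UNIV) + card (D - {0} \<times> UNIV)"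
    by (metis Int_Diff_Un card_Un_le)
  then show ?thesis
    unfolding D_def[symmetric] using zero_part nonzero_part by linarith
qed

lemma card_enc_collisions_le:
  assumes "irreducible P" and "l \<le> degree P"
  shows "card ({((k, k'), (u, u'), (v, v')). enc P n l u v k x = enc P n l u' v' k' x'}
           \<inter> (bitstr l \<times> bitstr l) \<times> (bitstr (degree P) \<times> bitstr (degree P))
               \<times> (bitstr (n - l) \<times> bitstr (n - l)))
         \<le> 2 ^ l * 2 ^ (n - l) * ((if x = x' then 2 ^ degree P else 0) + 2 ^ (degree P - (n - l)))"
    (is "card ?S \<le> _")
proof -
  define D where "D = {(d, u) \<in> bitstr l \<times> bitstr (degree P).
    x + x' = concat_bits (n - l) d (lsb (n - l) (gf_mult P u d))}"
  define f :: "(bit poly \<times> bit poly) \<times> (bit poly \<times> bit poly) \<times> (bit poly \<times> bit poly)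
      \<Rightarrow> bit poly \<times> bit poly \<times> bit poly \<times> bit poly"
    where "f = (\<lambda>((k, k'), (u, u'), (v, v')). (k, v, k + k', u))"
  have "inj_on f ?S"
    unfolding inj_on_def f_def by (auto dest: enc_eq_imp(1,2))
  moreover have "f ` ?S \<subseteq> bitstr l \<times> bitstr (n - l) \<times> D"
    unfolding f_def D_def by (auto dest: enc_eq_imp(3) intro: bitstr_add)
  moreover have "finite D"
    unfolding D_def by (rule finite_subset[of _ "bitstr l \<times> bitstr (degree P)"]) auto
  ultimately have "card ?S \<le> card (bitstr l \<times> bitstr (n - l) \<times> D)"
    by (intro card_inj_on_le) auto
  also have "\<dots> = 2 ^ l * 2 ^ (n - l) * card D"
    by (simp add: card_cartesian_product)
  also have "card D \<le> (if x = x' then 2 ^ degree P else 0) + 2 ^ (degree P - (n - l))"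
    using card_collision_keys_le[OF assms, of "x + x'" "n - l"]
    by (simp add: D_def bit_poly_add_eq_0_iff)
  finally show ?thesis
    by simp
qed

section \<open>Collision probability\<close>

lemma pair_pmf_of_set:
  assumes "finite A" "A \<noteq> {}" "finite B" "B \<noteq> {}"
  shows "pair_pmf (pmf_of_set A) (pmf_of_set B) = pmf_of_set (A \<times> B)"
proof (rule pmf_eqI)
  fix z :: "'a \<times> 'b"
  show "pmf (pair_pmf (pmf_of_set A) (pmf_of_set B)) z = pmf (pmf_of_set (A \<times> B)) z"
    using assms by (cases z) (simp add: pmf_pair card_cartesian_product indicator_def)
qed

lemma prob_enc_collision_le:
  assumes "irreducible P" and "degree P = max l (n - l)"
  shows "measure_pmf.prob
           (pair_pmf (pair_pmf (unif l) (unif l))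
             (pair_pmf (pair_pmf (unif (degree P)) (unif (degree P)))
                       (pair_pmf (unif (n - l)) (unif (n - l)))))
           {((k, k'), (u, u'), (v, v')). enc P n l u v k x = enc P n l u' v' k' x'}
         \<le> ((if x = x' then 2 ^ (n - l) else 0) + 1) / 2 ^ (l + degree P + 2 * (n - l))"
proof -
  define L m where "L = degree P" and "m = n - l"
  define \<Omega> where "\<Omega> = (bitstr l \<times> bitstr l) \<times> (bitstr L \<times> bitstr L) \<times> (bitstr m \<times> bitstr m)"
  define C where "C = {((k, k'), (u, u'), (v, v')). enc P n l u v k x = enc P n l u' v' k' x'}"
  have "pair_pmf (pair_pmf (unif l) (unif l))
      (pair_pmf (pair_pmf (unif L) (unif L)) (pair_pmf (unif m) (unif m))) = pmf_of_set \<Omega>"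
    by (simp add: \<Omega>_def unif_def pair_pmf_of_set)
  moreover have "\<Omega> \<noteq> {}" "finite \<Omega>"
    by (auto simp: \<Omega>_def)
  ultimately have "measure_pmf.prob (pair_pmf (pair_pmf (unif l) (unif l))
      (pair_pmf (pair_pmf (unif L) (unif L)) (pair_pmf (unif m) (unif m)))) C
      = card (C \<inter> \<Omega>) / card \<Omega>"
    by (simp add: measure_pmf_of_set Int_commute)
  also have "\<dots> \<le> 2 ^ l * 2 ^ m * ((if x = x' then 2 ^ L else 0) + 2 ^ (L - m)) / card \<Omega>"
  proof (rule divide_right_mono)
    have card_le: "card (C \<inter> \<Omega>) \<le> 2 ^ l * 2 ^ m * ((if x = x' then 2 ^ L else 0) + 2 ^ (L - m))"
      unfolding C_def \<Omega>_def L_def m_def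
      by (rule card_enc_collisions_le[OF assms(1)]) (simp add: assms(2))
    show "real (card (C \<inter> \<Omega>))
        \<le> 2 ^ l * 2 ^ m * ((if x = x' then 2 ^ L else 0) + 2 ^ (L - m))"
      using of_nat_mono[OF card_le, where 'a = real] by (cases "x = x'") simp_all
  qed simp
  also have "\<dots> = ((if x = x' then 2 ^ m else 0) + 1) / 2 ^ (l + L + 2 * m)"
  proof -
    have "(2 :: real) ^ m * 2 ^ (L - m) = 2 ^ L"
      using assms(2) by (simp add: L_def m_def flip: power_add)
    moreover have "real (card \<Omega>) = 2 ^ l * 2 ^ L * 2 ^ (l + L + 2 * m)"
      by (simp add: \<Omega>_def card_cartesian_product power_add mult_2)
    ultimately show ?thesis
      by (simp add: field_simps)
  qed
  finally show ?thesis
    unfolding C_def L_def m_def .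
qed

lemma measure_pmf_prob_eq_sum:
  assumes "finite A" "set_pmf M \<subseteq> A"
  shows "measure_pmf.prob M E = (\<Sum>a\<in>A. pmf M a * indicator E a)"
proof -
  have "measure_pmf.prob M E = measure_pmf.expectation M (indicator E :: _ \<Rightarrow> real)"
    by simp
  also have "\<dots> = (\<Sum>a\<in>A. indicator E a * pmf M a)"
    by (rule integral_measure_pmf_real) (use assms in auto)
  finally show ?thesis
    by (simp add: mult.commute)
qed

lemma measure_pair_pmf_eq_sum:
  assumes "finite (set_pmf Q)" "finite (set_pmf R)"
  shows "measure_pmf.prob (pair_pmf Q R) E
         = (\<Sum>q\<in>set_pmf Q. pmf Q q * measure_pmf.prob R {r. (q, r) \<in> E})"
proof -
  have "measure_pmf.prob (pair_pmf Q R) E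
      = (\<Sum>z\<in>set_pmf Q \<times> set_pmf R. pmf (pair_pmf Q R) z * indicator E z)"
    by (rule measure_pmf_prob_eq_sum) (use assms in auto)
  also have "\<dots> = (\<Sum>q\<in>set_pmf Q. pmf Q q *
      (\<Sum>r\<in>set_pmf R. pmf R r * indicator {r. (q, r) \<in> E} r))"
    by (simp add: sum.cartesian_product' sum_distrib_left pmf_pair indicator_def mult.assoc)
  also have "\<dots> = (\<Sum>q\<in>set_pmf Q. pmf Q q * measure_pmf.prob R {r. (q, r) \<in> E})"
    by (simp add: measure_pmf_prob_eq_sum[OF assms(2) order_refl])
  finally show ?thesis .
qed

lemma sum_pmf_collision:
  assumes "finite (set_pmf X)"
  shows "(\<Sum>x\<in>set_pmf X. \<Sum>x'\<in>set_pmf X. pmf X x * pmf X x' * ((if x = x' then a else 0) + b))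
         = a * (\<Sum>x\<in>set_pmf X. pmf X x ^ 2) + b"
proof -
  have "pmf X x * pmf X x' * ((if x = x' then a else 0) + b)
      = (if x = x' then a * pmf X x ^ 2 else 0) + b * pmf X x * pmf X x'" for x x'
    by (simp add: power2_eq_square algebra_simps)
  then have "(\<Sum>x'\<in>set_pmf X. pmf X x * pmf X x' * ((if x = x' then a else 0) + b))
      = a * pmf X x ^ 2 + b * pmf X x" if "x \<in> set_pmf X" for x
    using that assms sum_pmf_eq_1[OF assms order_refl]
    by (simp add: sum.distrib sum_distrib_left[symmetric] mult.assoc)
  then show ?thesis
    using sum_pmf_eq_1[OF assms order_refl]
    by (simp add: sum.distrib sum_distrib_left[symmetric])
qed

lemma enc_coll_prob_le:
  assumes "irreducible P" and "degree P = max l (n - l)" and "finite (set_pmf X)"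
  shows "enc_coll_prob P n l X
         \<le> (2 ^ (n - l) * (\<Sum>x\<in>set_pmf X. pmf X x ^ 2) + 1) / 2 ^ (l + degree P + 2 * (n - l))"
proof -
  define R where "R = pair_pmf (pair_pmf (unif l) (unif l))
    (pair_pmf (pair_pmf (unif (degree P)) (unif (degree P))) (pair_pmf (unif (n - l)) (unif (n - l))))"
  define C where "C = (\<lambda>(x, x'). {((k, k'), (u, u'), (v, v')).
    enc P n l u v k x = enc P n l u' v' k' x'})"
  define N where "N = l + degree P + 2 * (n - l)"
  have "finite (set_pmf R)"
    by (simp add: R_def unif_def)
  then have "enc_coll_prob P n l X
      = (\<Sum>(x, x')\<in>set_pmf X \<times> set_pmf X. pmf X x * pmf X x' * measure_pmf.prob R (C (x, x')))"
    unfolding enc_coll_prob_def assms(2)[symmetric]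
    by (subst measure_pair_pmf_eq_sum)
      (auto simp: assms(3) R_def C_def pmf_pair intro!: sum.cong arg_cong2[where f = measure])
  also have "\<dots> \<le> (\<Sum>(x, x')\<in>set_pmf X \<times> set_pmf X.
      pmf X x * pmf X x' * (((if x = x' then 2 ^ (n - l) else 0) + 1) / 2 ^ N))"
  proof (rule sum_mono, clarify)
    fix x x'
    show "pmf X x * pmf X x' * measure_pmf.prob R (C (x, x'))
        \<le> pmf X x * pmf X x' * (((if x = x' then 2 ^ (n - l) else 0) + 1) / 2 ^ N)"
      using prob_enc_collision_le[OF assms(1,2), of x x']
      by (intro mult_left_mono) (simp_all add: R_def C_def N_def)
  qed
  also have "\<dots> = (\<Sum>x\<in>set_pmf X. \<Sum>x'\<in>set_pmf X.
      pmf X x * pmf X x' * ((if x = x' then 2 ^ (n - l) else 0) + 1)) / 2 ^ N"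
    by (simp add: sum.cartesian_product' sum_divide_distrib)
  finally show ?thesis
    by (simp add: sum_pmf_collision assms(3) N_def)
qed

lemma sum_pmf_square_pos: "finite (set_pmf X) \<Longrightarrow> 0 < (\<Sum>x\<in>set_pmf X. pmf X x ^ 2)"
  by (intro sum_pos) (auto simp: set_pmf_not_empty set_pmf_iff)

lemma powr_uminus_coll_entropy:
  "finite (set_pmf X) \<Longrightarrow> 2 powr (- coll_entropy X) = (\<Sum>x\<in>set_pmf X. pmf X x ^ 2)"
  by (simp add: coll_entropy_def sum_pmf_square_pos)

theorem theorem1:
  fixes n l :: nat and P :: "bit poly" and X :: "bit poly pmf"
  assumes "1 \<le> n" and "l \<le> n"
    and "irreducible P" and "degree P = max l (n - l)"
    and "set_pmf X \<subseteq> bitstr n"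
  shows "enc_coll_prob P n l X
           \<le> 2 powr (- 2 * real n) * (1 + 2 powr (real (n - l) - coll_entropy X))"
proof -
  define CP where "CP = (\<Sum>x\<in>set_pmf X. pmf X x ^ 2)"
  have fin: "finite (set_pmf X)"
    using assms(5) finite_bitstr finite_subset by blast
  have "enc_coll_prob P n l X \<le> (2 ^ (n - l) * CP + 1) / 2 ^ (l + degree P + 2 * (n - l))"
    unfolding CP_def using enc_coll_prob_le[OF assms(3,4) fin] .
  also have "\<dots> \<le> (2 ^ (n - l) * CP + 1) / 2 ^ (2 * n)"
    using assms(2,4) sum_pmf_square_pos[OF fin]
    by (intro divide_left_mono power_increasing) (auto simp: CP_def)
  also have "\<dots> = 2 powr (- 2 * real n) * (1 + 2 powr (real (n - l) - coll_entropy X))"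
    using powr_uminus_coll_entropy[OF fin]
    by (simp add: CP_def powr_diff powr_minus powr_realpow[symmetric] divide_inverse)
  finally show ?thesis .
qed

end
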